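(* Let $X$ be a nominal set and $g:\mathcal V\to X$ any function. Then $g\in RX$ if and only if (1) $x\# g(x)$ for all $x\in\mathcal V$, and (2) there is a finite set $S\subseteq\mathcal V$ such that $\mathsf{supp}(g(x))\subseteq S$ for all $x\in\mathcal V$ and $g$ is constant on $\mathcal V\setminus S$.
   Context: Nominal sets over a countably infinite set $\mathcal V$ of names (sets with an action of finite permutations of $\mathcal V$, every element having a finite support; $\mathsf{supp}(u)$ the least support, $x\#u$ iff $x\notin\mathsf{supp}(u)$). $[\mathcal V,X]$ denotes the nominal set of functions $\mathcal V\to X$ that are finitely supported under $(\pi\cdot f)(x)=\pi\cdot f(\pi^{-1}(x))$. $RX=\{g\in[\mathcal V,X]\mid \forall x\in\mathcal V,\ x\#g(x)\}$. *)

theory Defs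
  imports Main "HOL-Library.Countable_Set"
begin

text \<open>Names are the elements of a type 'v (assumed countably infinite in the theorem).
  Finite permutations of names:\<close>
definition fperm :: "('v \<Rightarrow> 'v) \<Rightarrow> bool" where
  "fperm \<pi> \<longleftrightarrow> bij \<pi> \<and> finite {a. \<pi> a \<noteq> a}"

definition supports :: "(('v \<Rightarrow> 'v) \<Rightarrow> 'a \<Rightarrow> 'a) \<Rightarrow> 'v set \<Rightarrow> 'a \<Rightarrow> bool" where
  "supports act S u \<longleftrightarrow> (\<forall>\<pi>. fperm \<pi> \<and> (\<forall>a\<in>S. \<pi> a = a) \<longrightarrow> act \<pi> u = u)"

definition nominal_set :: "'a set \<Rightarrow> (('v \<Rightarrow> 'v) \<Rightarrow> 'a \<Rightarrow> 'a) \<Rightarrow> bool" where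
  "nominal_set X act \<longleftrightarrow>
     (\<forall>\<pi> u. fperm \<pi> \<and> u \<in> X \<longrightarrow> act \<pi> u \<in> X) \<and>
     (\<forall>u\<in>X. act id u = u) \<and>
     (\<forall>\<pi> \<sigma> u. fperm \<pi> \<and> fperm \<sigma> \<and> u \<in> X \<longrightarrow> act (\<pi> \<circ> \<sigma>) u = act \<pi> (act \<sigma> u)) \<and>
     (\<forall>u\<in>X. \<exists>S. finite S \<and> supports act S u)"

definition supp :: "(('v \<Rightarrow> 'v) \<Rightarrow> 'a \<Rightarrow> 'a) \<Rightarrow> 'a \<Rightarrow> 'v set" where
  "supp act u = \<Inter>{S. finite S \<and> supports act S u}"

definition fresh :: "(('v \<Rightarrow> 'v) \<Rightarrow> 'a \<Rightarrow> 'a) \<Rightarrow> 'v \<Rightarrow> 'a \<Rightarrow> bool" where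
  "fresh act a u \<longleftrightarrow> a \<notin> supp act u"

definition fun_act :: "(('v \<Rightarrow> 'v) \<Rightarrow> 'a \<Rightarrow> 'a) \<Rightarrow> ('v \<Rightarrow> 'v) \<Rightarrow> ('v \<Rightarrow> 'a) \<Rightarrow> ('v \<Rightarrow> 'a)" where
  "fun_act act \<pi> f = (\<lambda>x. act \<pi> (f (inv \<pi> x)))"

definition fs_funs :: "'a set \<Rightarrow> (('v \<Rightarrow> 'v) \<Rightarrow> 'a \<Rightarrow> 'a) \<Rightarrow> ('v \<Rightarrow> 'a) set" where
  "fs_funs X act = {f. (\<forall>x. f x \<in> X) \<and> (\<exists>S. finite S \<and> supports (fun_act act) S f)}"

definition R_set :: "'a set \<Rightarrow> (('v \<Rightarrow> 'v) \<Rightarrow> 'a \<Rightarrow> 'a) \<Rightarrow> ('v \<Rightarrow> 'a) set" where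
  "R_set X act = {g \<in> fs_funs X act. \<forall>x. fresh act x (g x)}"

end

theory Submission
  imports Defs "HOL-Combinatorics.Transposition"
begin

text \<open>Forward direction: if \<open>T\<close> is a finite support of \<open>g\<close>, then \<open>insert x T\<close> supports
  \<open>g x\<close>, so freshness of \<open>x\<close> gives \<open>supp (g x) \<subseteq> T\<close>; and for \<open>x, y \<notin> T\<close> the
  transposition of \<open>x\<close> with a sufficiently fresh name \<open>z\<close> fixes \<open>g\<close> and \<open>g x\<close>, whence
  \<open>g x = g z = g y\<close>.
  Backward direction: if \<open>g\<close> is constant outside a finite \<open>S\<close>, then \<open>S\<close> together with
  finite supports of the values of \<open>g\<close> on \<open>S\<close> and of its constant value supports \<open>g\<close>,
  because a permutation fixing \<open>S\<close> maps the complement of \<open>S\<close> to itself.\<close>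

lemma fperm_transpose: "fperm (transpose a b)"
proof -
  have "{x. transpose a b x \<noteq> x} \<subseteq> {a, b}" by (auto simp: transpose_def)
  then show ?thesis unfolding fperm_def by (simp add: finite_subset)
qed

lemma inv_fixpoint:
  assumes "bij \<pi>" and "\<pi> w = w"
  shows "inv \<pi> w = w"
  by (metis assms bij_is_inj inv_f_f)

lemma supports_apply:
  "supports act S u \<Longrightarrow> fperm \<pi> \<Longrightarrow> \<forall>a\<in>S. \<pi> a = a \<Longrightarrow> act \<pi> u = u"
  unfolding supports_def by blast

lemma supp_subset_support: "finite S \<Longrightarrow> supports act S u \<Longrightarrow> supp act u \<subseteq> S"
  unfolding supp_def by blast

lemma fresh_imp_support_avoiding:
  assumes "fresh act a u"
  obtains S where "finite S" "supports act S u" "a \<notin> S"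
  using assms unfolding fresh_def supp_def by blast

lemma supports_fun_act_apply:
  assumes "supports (fun_act act) T g" and "fperm \<pi>" and "\<forall>a\<in>T. \<pi> a = a"
  shows "act \<pi> (g (inv \<pi> w)) = g w"
proof -
  have "fun_act act \<pi> g = g" using assms unfolding supports_def by blast
  from fun_cong[OF this, of w] show ?thesis unfolding fun_act_def .
qed

lemma supports_fun_act_value:
  assumes "supports (fun_act act) T g"
  shows "supports act (insert x T) (g x)"
  unfolding supports_def
proof (intro allI impI)
  fix \<pi> assume \<pi>: "fperm \<pi> \<and> (\<forall>a\<in>insert x T. \<pi> a = a)"
  then have "inv \<pi> x = x" by (simp add: fperm_def inv_fixpoint)
  moreover have "act \<pi> (g (inv \<pi> x)) = g x"
    using supports_fun_act_apply[OF assms] \<pi> by blast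
  ultimately show "act \<pi> (g x) = g x" by simp
qed

lemma supp_value_subset_support:
  assumes "finite T" and "supports (fun_act act) T g" and "fresh act x (g x)"
  shows "supp act (g x) \<subseteq> T"
proof -
  have "supp act (g x) \<subseteq> insert x T"
    using assms(1) supports_fun_act_value[OF assms(2)] by (simp add: supp_subset_support)
  with assms(3) show ?thesis by (auto simp: fresh_def)
qed

lemma value_eq_at_fresh_name:
  assumes g: "supports (fun_act act) T g"
    and C: "supports act C (g u)"
    and "u \<notin> T" "z \<notin> T" "u \<notin> C" "z \<notin> C"
  shows "g u = g z"
proof -
  let ?\<tau> = "transpose u z"
  have fixes_T: "\<forall>a\<in>T. ?\<tau> a = a" and fixes_C: "\<forall>a\<in>C. ?\<tau> a = a"
    using assms(3-6) by (auto simp: transpose_def)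
  have "act ?\<tau> (g (inv ?\<tau> z)) = g z"
    by (rule supports_fun_act_apply[OF g fperm_transpose fixes_T])
  moreover have "act ?\<tau> (g u) = g u"
    by (rule supports_apply[OF C fperm_transpose fixes_C])
  ultimately show ?thesis by simp
qed

lemma supported_fresh_function_eventually_const:
  fixes T :: "'v set"
  assumes "infinite (UNIV :: 'v set)"
    and "finite T" and "supports (fun_act act) T g"
    and fresh: "\<forall>x. fresh act x (g x)"
    and "x \<notin> T" "y \<notin> T"
  shows "g x = g y"
proof -
  obtain A where A: "finite A" "supports act A (g x)" "x \<notin> A"
    by (rule fresh_imp_support_avoiding[OF fresh[rule_format]])
  obtain B where B: "finite B" "supports act B (g y)" "y \<notin> B"
    by (rule fresh_imp_support_avoiding[OF fresh[rule_format]])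
  obtain z :: 'v where z: "z \<notin> T \<union> A \<union> B"
    using ex_new_if_finite[OF assms(1), of "T \<union> A \<union> B"] assms(2) A(1) B(1) by blast
  have "g x = g z"
    using value_eq_at_fresh_name[OF assms(3) A(2)] assms(5) A(3) z by blast
  moreover have "g y = g z"
    using value_eq_at_fresh_name[OF assms(3) B(2)] assms(6) B(3) z by blast
  ultimately show ?thesis by simp
qed

lemma eventually_const_fun_supports:
  assumes const: "\<forall>x y. x \<notin> S \<and> y \<notin> S \<longrightarrow> g x = g y"
    and "c \<notin> S"
    and A: "\<forall>x\<in>insert c S. supports act (A x) (g x)"
  shows "supports (fun_act act) (S \<union> (\<Union>x\<in>insert c S. A x)) g"
  unfolding supports_def
proof (intro allI impI)
  let ?T = "S \<union> (\<Union>x\<in>insert c S. A x)"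
  fix \<pi> assume "fperm \<pi> \<and> (\<forall>a\<in>?T. \<pi> a = a)"
  then have \<pi>: "fperm \<pi>" and fixes_T: "\<And>a. a \<in> ?T \<Longrightarrow> \<pi> a = a" by auto
  then have bij: "bij \<pi>" by (simp add: fperm_def)
  have fixes_value: "act \<pi> (g x) = g x" if "x \<in> insert c S" for x
  proof (rule supports_apply[OF _ \<pi>])
    show "supports act (A x) (g x)" using A that by blast
    show "\<forall>a\<in>A x. \<pi> a = a" using fixes_T that by blast
  qed
  have pointwise: "act \<pi> (g (inv \<pi> w)) = g w" for w
  proof (cases "w \<in> S")
    case True
    then have "inv \<pi> w = w" using fixes_T inv_fixpoint[OF bij] by blast
    then show ?thesis using fixes_value True by simp
  next
    case False
    have "inv \<pi> w \<notin> S"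
    proof
      assume "inv \<pi> w \<in> S"
      then have "\<pi> (inv \<pi> w) = inv \<pi> w" using fixes_T by blast
      moreover have "\<pi> (inv \<pi> w) = w" by (rule surj_f_inv_f[OF bij_is_surj[OF bij]])
      ultimately show False using False \<open>inv \<pi> w \<in> S\<close> by metis
    qed
    then have "g (inv \<pi> w) = g c" "g w = g c" using const False \<open>c \<notin> S\<close> by blast+
    then show ?thesis using fixes_value by simp
  qed
  show "fun_act act \<pi> g = g" unfolding fun_act_def by (rule ext) (fact pointwise)
qed

theorem lemma4p12:
  fixes X :: "'a set" and act :: "('v \<Rightarrow> 'v) \<Rightarrow> 'a \<Rightarrow> 'a" and g :: "'v \<Rightarrow> 'a"
  assumes "infinite (UNIV :: 'v set)" and "countable (UNIV :: 'v set)"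
    and "nominal_set X act"
    and "\<forall>x. g x \<in> X"
  shows "g \<in> R_set X act \<longleftrightarrow>
           (\<forall>x. fresh act x (g x)) \<and>
           (\<exists>S. finite S \<and> (\<forall>x. supp act (g x) \<subseteq> S) \<and>
                (\<forall>x y. x \<notin> S \<and> y \<notin> S \<longrightarrow> g x = g y))"
proof
  assume "g \<in> R_set X act"
  then obtain T where fresh: "\<forall>x. fresh act x (g x)"
    and T: "finite T" "supports (fun_act act) T g"
    by (auto simp: R_set_def fs_funs_def)
  have "\<forall>x. supp act (g x) \<subseteq> T"
    using supp_value_subset_support[OF T] fresh by blast
  moreover have "\<forall>x y. x \<notin> T \<and> y \<notin> T \<longrightarrow> g x = g y"
    using supported_fresh_function_eventually_const[OF assms(1) T fresh] by blast
  ultimately show "(\<forall>x. fresh act x (g x)) \<and> (\<exists>S. finite S \<and> (\<forall>x. supp act (g x) \<subseteq> S) \<and>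
          (\<forall>x y. x \<notin> S \<and> y \<notin> S \<longrightarrow> g x = g y))"
    using fresh T(1) by blast
next
  assume rhs: "(\<forall>x. fresh act x (g x)) \<and> (\<exists>S. finite S \<and> (\<forall>x. supp act (g x) \<subseteq> S) \<and>
          (\<forall>x y. x \<notin> S \<and> y \<notin> S \<longrightarrow> g x = g y))"
  then obtain S where S: "finite S" "\<forall>x y. x \<notin> S \<and> y \<notin> S \<longrightarrow> g x = g y" by blast
  obtain c where c: "c \<notin> S" using ex_new_if_finite[OF assms(1) S(1)] by blast
  have "\<forall>u\<in>X. \<exists>A. finite A \<and> supports act A u"
    using assms(3) by (simp add: nominal_set_def)
  with assms(4) have "\<forall>x. \<exists>A. finite A \<and> supports act A (g x)" by blast
  then obtain A where A: "\<And>x. finite (A x) \<and> supports act (A x) (g x)" by metis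
  have "supports (fun_act act) (S \<union> (\<Union>x\<in>insert c S. A x)) g"
    using eventually_const_fun_supports[OF S(2) c] A by blast
  moreover have "finite (S \<union> (\<Union>x\<in>insert c S. A x))" using S(1) A by simp
  ultimately have "g \<in> fs_funs X act" using assms(4) unfolding fs_funs_def by blast
  with rhs show "g \<in> R_set X act" by (simp add: R_set_def)
qed

end
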